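(* Any contraction of a left increasing tree is left increasing: if $(T,\lambda)$ is a left increasing tree with $n$ branchings and $A\subseteq[n]$, then the increasing tree $\tau(\sigma(T,\lambda)|_A)$ is left increasing.
   Context: A (planar rooted) tree is a finite planar rooted tree in which each vertex has one outgoing edge and at least two incoming edges (ordered left to right); $\varepsilon$ is the trivial tree. $\bigvee(T_0,\ldots,T_m)$ ($m\ge1$) joins the roots of $T_0,\ldots,T_m$ to a new vertex with a new root. A vertex with $j+1$ incoming edges carries $j$ branchings (pairs of consecutive incoming edges). Branchings are totally ordered left to right recursively: for $T=\bigvee(T_0,\ldots,T_m)$ with root branchings $b_1,\ldots,b_m$, $b_i\prec b\prec b_{i+1}$ for $b$ in $T_i$; the natural labelling is the order-preserving bijection from $[n]=\{1,\ldots,n\}$ to the branchings. A level function is a surjection $\lambda$ from vertices onto $[k]$ strictly increasing along each leaf-to-root path; an increasing tree is $(T,\lambda)$; a branching has the level of its vertex. $\sigma(T,\lambda)=(P_1,\ldots,P_k)$ where $P_i$ is the set of natural labels of branchings at level $i$; $\sigma$ is a bijection from increasing trees with $n$ branchings to set compositions of $[n]$ (tuples of pairwise disjoint non-empty sets with union $[n]$), with inverse $\tau$. For a set composition $P=(P_1,\ldots,P_k)$ of $[n]$ and $A\subseteq[n]$, $P|_A$ is obtained from $(P_1\cap A,\ldots,P_k\cap A)$ by deleting empty entries and relabelling $A$ to $[|A|]$ by the order-preserving bijection. $\mathsf{Inc}$: $\mathsf{Inc}(\varepsilon)=\varepsilon$; if $T=\bigvee(T_0,\ldots,T_m)$ and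 $\mathsf{Inc}(T_i)=(T_i,\lambda_i)$ with $k_i$ levels, then $\mathsf{Inc}(T)=(T,\lambda)$ with $\lambda(v)=k_0+\cdots+k_{i-1}+\lambda_i(v)$ for $v$ in $T_i$ and root vertex level $k_0+\cdots+k_m+1$. An increasing tree is left increasing if it lies in the image of $\mathsf{Inc}$. *)

theory Defs
  imports Main
begin

text \<open>Planar rooted trees. Leaf is the trivial tree (a bare edge, no vertex);
  Node ts is the tree obtained by joining the roots of ts (left to right) to a new vertex.\<close>
datatype ptree = Leaf | Node "ptree list"

datatype ltree = LLeaf | LNode nat "ltree list"

fun wf_pt :: "ptree \<Rightarrow> bool" where
  "wf_pt Leaf = True"
| "wf_pt (Node ts) = (2 \<le> length ts \<and> (\<forall>t\<in>set ts. wf_pt t))"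

fun shape :: "ltree \<Rightarrow> ptree" where
  "shape LLeaf = Leaf"
| "shape (LNode l ts) = Node (map shape ts)"

fun levels :: "ltree \<Rightarrow> nat set" where
  "levels LLeaf = {}"
| "levels (LNode l ts) = insert l (\<Union>t\<in>set ts. levels t)"

fun incr :: "ltree \<Rightarrow> bool" where
  "incr LLeaf = True"
| "incr (LNode l ts) = (\<forall>t\<in>set ts. incr t \<and> (\<forall>l'\<in>levels t. l' < l))"

definition is_increasing :: "ltree \<Rightarrow> bool" where
  "is_increasing t \<longleftrightarrow> wf_pt (shape t) \<and> incr t \<and> (\<exists>k. levels t = {1..k})"

definition nlevels :: "ltree \<Rightarrow> nat" where
  "nlevels t = card (levels t)"

text \<open>Levels of the branchings listed in their natural (left-to-right) order:
  for a vertex with subtrees T0..Tm the order is T0, b1, T1, ..., bm, Tm.\<close>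
fun bw :: "ltree \<Rightarrow> nat list" where
  "bw LLeaf = []"
| "bw (LNode l []) = []"
| "bw (LNode l (t # ts)) = bw t @ concat (map (\<lambda>s. l # bw s) ts)"

definition nbranch :: "ltree \<Rightarrow> nat" where
  "nbranch t = length (bw t)"

definition set_composition :: "nat \<Rightarrow> nat set list \<Rightarrow> bool" where
  "set_composition n P \<longleftrightarrow> (\<forall>S\<in>set P. S \<noteq> {}) \<and>
     (\<forall>i<length P. \<forall>j<length P. i \<noteq> j \<longrightarrow> P ! i \<inter> P ! j = {}) \<and>
     \<Union>(set P) = {1..n}"

text \<open>sigma: P_i = natural labels (1-based) of the branchings at level i.\<close>
definition sigma :: "ltree \<Rightarrow> nat set list" where
  "sigma t = map (\<lambda>i. {j \<in> {1..nbranch t}. bw t ! (j - 1) = i}) [1..<nlevels t + 1]"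

definition tau :: "nat set list \<Rightarrow> ltree" where
  "tau P = (THE t. is_increasing t \<and> sigma t = P)"

definition restr :: "nat set list \<Rightarrow> nat set \<Rightarrow> nat set list" where
  "restr P A = map (\<lambda>S. (\<lambda>x. card {a \<in> A. a \<le> x}) ` S)
                  (filter (\<lambda>S. S \<noteq> {}) (map (\<lambda>S. S \<inter> A) P))"

fun shift :: "nat \<Rightarrow> ltree \<Rightarrow> ltree" where
  "shift c LLeaf = LLeaf"
| "shift c (LNode l ts) = LNode (c + l) (map (shift c) ts)"

text \<open>The map Inc. incs c ts processes children left to right, with c the number of levels
  already used by the previous children.\<close>
fun inc :: "ptree \<Rightarrow> ltree" and incs :: "nat \<Rightarrow> ptree list \<Rightarrow> ltree list" where
  "inc Leaf = LLeaf"
| "inc (Node ts) = LNode (sum_list (map (\<lambda>t. nlevels (inc t)) ts) + 1) (incs 0 ts)"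
| "incs c [] = []"
| "incs c (t # ts) = shift c (inc t) # incs (c + nlevels (inc t)) ts"

definition left_increasing :: "ltree \<Rightarrow> bool" where
  "left_increasing t \<longleftrightarrow> is_increasing t \<and> (\<exists>T. wf_pt T \<and> inc T = t)"

end

theory Submission
  imports Defs "HOL-Library.Sublist"
begin

(* Let bw t be the word of levels of the branchings of t in their natural order, so that sigma t
   is the list of fibres of bw t.  An increasing tree is determined by its word: the root carries
   the largest letter, whose occurrences cut the word into the words of the subtrees.  Hence sigma
   is injective and tau inverts it.

   The word of Inc(T) avoids the patterns 121 and 231, because Inc gives each subtree an interval
   of levels lying below the levels of the subtrees to its right and below the root.  Conversely,
   a word with letter set {1..n} avoiding these patterns is the word of some Inc(T): the first
   occurrence of n cuts it into a word on an initial interval of letters and a remainder on the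
   complementary interval, and both parts are again of this form.

   Restricting sigma t to A amounts to taking the subword of bw t at the positions in A and
   replacing each letter by its rank.  Both operations preserve pattern avoidance, so the
   restriction is again sigma of some Inc(T). *)

section \<open>Levels and words of Inc(T)\<close>

fun nvertices :: "ptree \<Rightarrow> nat" where
  "nvertices Leaf = 0"
| "nvertices (Node ts) = sum_list (map nvertices ts) + 1"

lemma shift_0 [simp]: "shift 0 t = t"
  by (induction t) (auto simp: map_idI)

lemma shift_shift [simp]: "shift a (shift b t) = shift (a + b) t"
  by (induction t) (auto simp: add.assoc)

lemma map_shift_incs: "map (shift a) (incs c ts) = incs (a + c) ts"
  by (induction ts arbitrary: c) (auto simp: add.assoc)

lemma bw_shift: "bw (shift c t) = map ((+) c) (bw t)"
  by (induction t rule: bw.induct) (simp_all add: map_concat o_def cong: map_cong)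

lemma levels_shift: "levels (shift c t) = (+) c ` levels t"
  by (induction t) auto

lemma incr_shift: "incr (shift c t) = incr t"
  by (induction t) (auto simp: levels_shift)

lemma shape_shift: "shape (shift c t) = shape t"
  by (induction t) auto

lemma levels_inc:
  "levels (inc T) = {1..nvertices T}"
  "(\<Union>t\<in>set (incs c ts). levels t) = {c+1..c + sum_list (map nvertices ts)}"
proof (induction T and c ts rule: inc_incs.induct)
  case (2 ts)
  have "sum_list (map (\<lambda>t. nlevels (inc t)) ts) = sum_list (map nvertices ts)"
    using 2 by (auto simp: nlevels_def intro!: arg_cong[where f=sum_list] map_cong)
  then have "levels (inc (Node ts)) =
      insert (sum_list (map nvertices ts) + 1) {1..sum_list (map nvertices ts)}"
    using 2(2) by simp
  also have "\<dots> = {1..nvertices (Node ts)}"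
    by auto
  finally show ?case .
next
  case (4 c t ts)
  then have "levels (shift c (inc t)) = {c+1..c + nvertices t}"
    by (simp add: levels_shift)
  moreover have "nlevels (inc t) = nvertices t"
    using 4 by (simp add: nlevels_def)
  ultimately show ?case
    using 4 by auto
qed simp_all

lemma nlevels_inc [simp]: "nlevels (inc T) = nvertices T"
  by (simp add: nlevels_def levels_inc)

lemma inc_Node: "inc (Node ts) = LNode (sum_list (map nvertices ts) + 1) (incs 0 ts)"
  by (simp cong: map_cong)

lemma shape_inc:
  "shape (inc T) = T"
  "map shape (incs c ts) = ts"
  by (induction T and c ts rule: inc_incs.induct) (auto simp: shape_shift)

lemma incr_inc:
  "incr (inc T)"
  "\<forall>t\<in>set (incs c ts). incr t"
proof (induction T and c ts rule: inc_incs.induct)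
  case (2 ts)
  have "\<forall>t\<in>set (incs 0 ts). \<forall>l\<in>levels t. l < sum_list (map nvertices ts) + 1"
  proof (intro ballI)
    fix t l
    assume "t \<in> set (incs 0 ts)" "l \<in> levels t"
    then have "l \<in> {0+1..0 + sum_list (map nvertices ts)}"
      using levels_inc(2)[of 0 ts] by blast
    then show "l < sum_list (map nvertices ts) + 1"
      by simp
  qed
  then show ?case
    using 2 by (simp add: inc_Node)
qed (simp_all add: incr_shift)

lemma is_increasing_inc: "wf_pt T \<Longrightarrow> is_increasing (inc T)"
  unfolding is_increasing_def using shape_inc(1) incr_inc(1) levels_inc(1) by auto

lemma set_bw_subset_levels: "set (bw t) \<subseteq> levels t"
  by (induction t rule: bw.induct) auto

lemma set_bw_eq_levels: "wf_pt (shape t) \<Longrightarrow> set (bw t) = levels t"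
proof (induction t rule: bw.induct)
  case (3 l t ts)
  then show ?case by (cases ts) auto
qed auto

lemma set_bw_shift_inc: "set (bw (shift c (inc T))) \<subseteq> {c+1..c + nvertices T}"
  using set_bw_subset_levels[of "shift c (inc T)"]
  by (simp add: levels_shift levels_inc add.commute)

section \<open>The patterns 121 and 231\<close>

lemma set_mono_subseq: "subseq xs ys \<Longrightarrow> set xs \<subseteq> set ys"
  by (induction rule: list_emb.induct) auto

(* (a, b, c) with a < b and c \<le> a is an occurrence of 121 (c = a) or of 231 (c < a). *)
definition avoids_121_231 :: "'a::linorder list \<Rightarrow> bool" where
  "avoids_121_231 w \<longleftrightarrow> (\<forall>a b c. subseq [a, b, c] w \<longrightarrow> a < b \<longrightarrow> a < c)"

lemma avoids_121_231_subseq: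
  "avoids_121_231 w \<Longrightarrow> subseq v w \<Longrightarrow> avoids_121_231 v"
  unfolding avoids_121_231_def by (meson subseq_order.trans)

lemma avoids_121_231_map:
  assumes "avoids_121_231 w"
    and mono: "\<And>x y. x \<in> set w \<Longrightarrow> y \<in> set w \<Longrightarrow> x < y \<Longrightarrow> f x < f y"
  shows "avoids_121_231 (map f w)"
  unfolding avoids_121_231_def
proof (intro allI impI)
  fix a b c
  assume "subseq [a, b, c] (map f w)" "a < b"
  then obtain N where "map f (nths w N) = [a, b, c]"
    by (metis subseq_conv_nths nths_map)
  then obtain x y z where xyz: "nths w N = [x, y, z]" "a = f x" "b = f y" "c = f z"
    by (auto simp: map_eq_Cons_conv)
  then have "subseq [x, y, z] w"
    by (metis subseq_conv_nths)
  then have in_w: "x \<in> set w" "y \<in> set w" "z \<in> set w"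
    using set_mono_subseq by fastforce+
  have "x < y"
    using mono[OF in_w(2,1)] \<open>a < b\<close> xyz(2,3) by (cases x y rule: linorder_cases) auto
  then have "x < z"
    using \<open>subseq [x, y, z] w\<close> assms(1) unfolding avoids_121_231_def by blast
  then show "a < c"
    using mono[OF in_w(1,3)] xyz(2,4) by simp
qed

lemma avoids_121_231_appendD:
  assumes "avoids_121_231 (x @ y)"
  shows "avoids_121_231 x" "avoids_121_231 y"
  using assms by (auto intro: avoids_121_231_subseq)

lemma avoids_121_231_append_Cons:
  assumes "avoids_121_231 x" "avoids_121_231 y"
    and "set x \<subseteq> {..<m}" "set y \<subseteq> insert k {m..<k}" "m \<le> k"
  shows "avoids_121_231 (x @ k # y)"
  unfolding avoids_121_231_def
proof (intro allI impI)
  fix a b c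
  assume abc: "subseq [a, b, c] (x @ k # y)" and "a < b"
  obtain xs1 xs2 where split: "[a, b, c] = xs1 @ xs2" "subseq xs1 x" "subseq xs2 (k # y)"
    using abc by (rule subseq_appendE)
  have ge_m: "m \<le> v" if "v \<in> set (k # y)" for v
  proof -
    have "v \<in> insert k {m..<k}"
      using that assms(4) by auto
    then show ?thesis
      using assms(5) by auto
  qed
  consider "xs1 = []" | "xs1 = [a]" | "xs1 = [a, b]" | "xs1 = [a, b, c]"
    using split(1) by (auto simp: Cons_eq_append_conv)
  then show "a < c"
  proof cases
    case 1
    then have abc': "subseq [a, b, c] (k # y)"
      using split by simp
    have "a \<noteq> k"
    proof
      assume "a = k"
      then have "b \<in> set y"
        using abc' set_mono_subseq by fastforce
      then have "b \<in> insert k {m..<k}"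
        using assms(4) by blast
      then show False
        using \<open>a = k\<close> \<open>a < b\<close> by auto
    qed
    then have "subseq [a, b, c] y"
      using abc' by simp
    then show ?thesis
      using assms(2) \<open>a < b\<close> unfolding avoids_121_231_def by blast
  next
    case 2
    then have "a \<in> set x" "c \<in> set (k # y)"
      using split set_mono_subseq by fastforce+
    then have "a < m" "m \<le> c"
      using assms(3) ge_m by auto
    then show ?thesis
      by (rule less_le_trans)
  next
    case 3
    then have "a \<in> set x" "c \<in> set (k # y)"
      using split set_mono_subseq by fastforce+
    then have "a < m" "m \<le> c"
      using assms(3) ge_m by auto
    then show ?thesis
      by (rule less_le_trans)
  next
    case 4
    then have "subseq [a, b, c] x"
      using split by simp
    then show ?thesis
      using assms(1) \<open>a < b\<close> unfolding avoids_121_231_def by blast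
  qed
qed

lemma avoids_121_231_shift:
  fixes w :: "nat list"
  shows "avoids_121_231 w \<Longrightarrow> avoids_121_231 (map ((+) c) w)"
  by (rule avoids_121_231_map) simp_all

lemma avoids_121_231_bw_incs:
  assumes "\<forall>t\<in>set ts. avoids_121_231 (bw (inc t))" "c + sum_list (map nvertices ts) < l"
  shows "avoids_121_231 (bw (LNode l (incs c ts)))"
  using assms
proof (induction ts arbitrary: c rule: induct_list012)
  case 1
  then show ?case
    by (simp add: avoids_121_231_def)
next
  case (2 t)
  then show ?case
    by (simp add: bw_shift avoids_121_231_shift)
next
  case (3 t s r)
  let ?x = "bw (shift c (inc t))"
  let ?y = "bw (LNode l (incs (c + nvertices t) (s # r)))"
  have sx: "set ?x \<subseteq> {c+1..c + nvertices t}"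
    by (rule set_bw_shift_inc)
  have "set ?y \<subseteq> levels (LNode l (incs (c + nvertices t) (s # r)))"
    by (rule set_bw_subset_levels)
  also have "\<dots> =
      insert l {c + nvertices t + 1..c + nvertices t + sum_list (map nvertices (s # r))}"
    using levels_inc(2)[of "c + nvertices t" "s # r"] by simp
  also have "\<dots> \<subseteq> insert l {c + nvertices t + 1..<l}"
    using "3.prems"(2) by auto
  finally have sy: "set ?y \<subseteq> insert l {c + nvertices t + 1..<l}" .
  have "avoids_121_231 (?x @ l # ?y)"
  proof (rule avoids_121_231_append_Cons)
    show "avoids_121_231 ?x"
      using "3.prems"(1) by (simp add: bw_shift avoids_121_231_shift)
    show "avoids_121_231 ?y"
      using "3.prems" by (intro "3.IH"(2)) auto
    show "set ?x \<subseteq> {..<c + nvertices t + 1}"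
      using sx by (rule order_trans) auto
    show "c + nvertices t + 1 \<le> l"
      using "3.prems"(2) by simp
  qed (fact sy)
  then show ?case
    by simp
qed

lemma avoids_121_231_bw_inc: "avoids_121_231 (bw (inc T))"
proof (induction T)
  case (Node ts)
  then show ?case
    by (simp only: inc_Node) (rule avoids_121_231_bw_incs, auto)
qed (simp add: avoids_121_231_def)

section \<open>Words avoiding 121 and 231 are words of Inc(T)\<close>

lemma interval_split:
  fixes A B :: "nat set"
  assumes "A \<union> B = {c+1..c+n}" "\<forall>x\<in>A. \<forall>y\<in>B. x < y"
  obtains m m' where "n = m + m'" "A = {c+1..c+m}" "B = {c+m+1..c+m+m'}"
proof (cases "B = {}")
  case True
  then show ?thesis
    using that[of n 0] assms(1) by simp
next
  case False
  define b where "b = Min B"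
  have "finite B"
    using assms(1) by (metis finite_Un finite_atLeastAtMost)
  then have b: "b \<in> B" "\<forall>y\<in>B. b \<le> y"
    using False by (simp_all add: b_def)
  then have bounds: "c + 1 \<le> b" "b \<le> c + n"
    using assms(1) by auto
  have "A = {c+1..b-1}"
  proof (intro equalityI subsetI)
    fix x
    assume "x \<in> A"
    then show "x \<in> {c+1..b-1}"
      using assms b(1) by fastforce
  next
    fix x
    assume x: "x \<in> {c+1..b-1}"
    then have "x \<in> A \<union> B"
      using assms(1) bounds by auto
    moreover have "x \<notin> B"
      using x b(2) by fastforce
    ultimately show "x \<in> A"
      by blast
  qed
  moreover have "B = {b..c+n}"
  proof (intro equalityI subsetI)
    fix y
    assume "y \<in> B"
    then show "y \<in> {b..c+n}"
      using assms(1) b(2) by auto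
  next
    fix y
    assume y: "y \<in> {b..c+n}"
    then have "y \<in> A \<union> B"
      using assms(1) bounds by auto
    moreover have "y \<notin> A"
      using y assms(2) b(1) by fastforce
    ultimately show "y \<in> B"
      by blast
  qed
  ultimately show ?thesis
    using that[of "b - c - 1" "c + n + 1 - b"] bounds by simp
qed

lemma tree_word_if_forest_word:
  assumes forest: "\<And>c n. set w = {c+1..c+n+1} \<Longrightarrow>
      \<exists>ts. 2 \<le> length ts \<and> (\<forall>t\<in>set ts. wf_pt t) \<and>
        sum_list (map nvertices ts) = n \<and> bw (LNode (c+n+1) (incs c ts)) = w"
    and "set w = {c+1..c+n}"
  shows "\<exists>T. wf_pt T \<and> nvertices T = n \<and> bw (shift c (inc T)) = w"
proof (cases n)
  case 0
  then show ?thesis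
    using assms(2) by (intro exI[of _ Leaf]) simp
next
  case (Suc m)
  then obtain ts where "2 \<le> length ts" "\<forall>t\<in>set ts. wf_pt t" "sum_list (map nvertices ts) = m"
      "bw (LNode (c+m+1) (incs c ts)) = w"
    using forest[of c m] assms(2) by auto
  then show ?thesis
    using Suc by (intro exI[of _ "Node ts"]) (simp add: map_shift_incs)
qed

lemma avoids_121_231_split_max:
  fixes w :: "nat list"
  assumes "avoids_121_231 w" "set w = {c+1..c+n+1}"
  obtains u rest n0 n1 where "w = u @ (c+n+1) # rest" "n = n0 + n1"
    "set u = {c+1..c+n0}" "set rest - {c+n+1} = {c+n0+1..c+n0+n1}"
proof -
  let ?k = "c+n+1"
  have "?k \<in> set w"
    using assms(2) by simp
  then obtain u rest where w: "w = u @ ?k # rest" "?k \<notin> set u"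
    by (meson split_list_first)
  have below: "\<forall>a\<in>set u. \<forall>b\<in>set rest - {?k}. a < b"
  proof (intro ballI)
    fix a b
    assume a: "a \<in> set u" and b: "b \<in> set rest - {?k}"
    have "subseq [a] u" "subseq [?k, b] (?k # rest)"
      using a b by (simp_all add: subseq_singleton_left)
    from list_emb_append_mono[OF this] have "subseq [a, ?k, b] w"
      using w(1) by simp
    moreover have "a \<in> set w" "a \<noteq> ?k"
      using a w by auto
    then have "a < ?k"
      using assms(2) by simp
    ultimately show "a < b"
      using assms(1) unfolding avoids_121_231_def by blast
  qed
  have "set u \<union> (set rest - {?k}) = set w - {?k}"
    using w by auto
  also have "\<dots> = {c+1..c+n}"
    using assms(2) by auto
  finally obtain n0 n1 where "n = n0 + n1"
      "set u = {c+1..c+n0}" "set rest - {?k} = {c+n0+1..c+n0+n1}"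
    using below by (elim interval_split)
  with w(1) show thesis
    by (rule that)
qed

lemma forest_word_exists:
  assumes "avoids_121_231 w" "set w = {c+1..c+n+1}"
  shows "\<exists>ts. 2 \<le> length ts \<and> (\<forall>t\<in>set ts. wf_pt t) \<and>
      sum_list (map nvertices ts) = n \<and> bw (LNode (c+n+1) (incs c ts)) = w"
  using assms
proof (induction "length w" arbitrary: w c n rule: less_induct)
  case less
  let ?k = "c+n+1"
  have tree: "\<exists>T. wf_pt T \<and> nvertices T = m \<and> bw (shift d (inc T)) = v"
    if v: "length v < length w" "avoids_121_231 v" "set v = {d+1..d+m}" for v d m
  proof (rule tree_word_if_forest_word[OF _ v(3)])
    fix d' m'
    assume "set v = {d'+1..d'+m'+1}"
    then show "\<exists>ts. 2 \<le> length ts \<and> (\<forall>t\<in>set ts. wf_pt t) \<and>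
        sum_list (map nvertices ts) = m' \<and> bw (LNode (d'+m'+1) (incs d' ts)) = v"
      by (rule less.hyps[OF v(1,2)])
  qed
  obtain u rest n0 n1 where w: "w = u @ ?k # rest" and n: "n = n0 + n1"
    and n0: "set u = {c+1..c+n0}" and n1: "set rest - {?k} = {c+n0+1..c+n0+n1}"
    using less.prems by (rule avoids_121_231_split_max)
  have avoids_u: "avoids_121_231 u" and avoids_rest: "avoids_121_231 rest"
    using less.prems(1) avoids_121_231_appendD[of u "?k # rest"]
      avoids_121_231_appendD(2)[of "[?k]" rest] unfolding w by simp_all
  have k: "?k = (c + n0) + n1 + 1"
    using n by simp
  obtain T0 where T0: "wf_pt T0" "nvertices T0 = n0" "bw (shift c (inc T0)) = u"
    using tree[OF _ avoids_u n0] w by auto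
  have bw_Cons: "bw (LNode ?k (incs c (T0 # ts))) = w"
    if "ts \<noteq> []" "bw (LNode ?k (incs (c + n0) ts)) = rest" for ts
    using that T0 w by (cases ts) auto
  show ?case
  proof (cases "?k \<in> set rest")
    case True
    then have "set rest = insert ?k (set rest - {?k})"
      by blast
    also have "\<dots> = {(c+n0)+1..(c+n0)+n1+1}"
      unfolding n1 unfolding k by auto
    finally obtain ts where ts: "2 \<le> length ts" "\<forall>t\<in>set ts. wf_pt t"
        "sum_list (map nvertices ts) = n1" "bw (LNode ((c+n0)+n1+1) (incs (c+n0) ts)) = rest"
      using less.hyps[of rest "c+n0" n1] w avoids_rest by auto
    have "ts \<noteq> []"
      using ts(1) by auto
    from bw_Cons[OF this ts(4)[folded k]] show ?thesis
      using ts T0 n by (intro exI[of _ "T0 # ts"]) simp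
  next
    case False
    then have "set rest = {(c+n0)+1..(c+n0)+n1}"
      using n1 by blast
    then obtain T1 where T1: "wf_pt T1" "nvertices T1 = n1" "bw (shift (c+n0) (inc T1)) = rest"
      using tree[of rest "c+n0" n1] w avoids_rest by auto
    from bw_Cons[of "[T1]"] show ?thesis
      using T1 T0 n by (intro exI[of _ "[T0, T1]"]) simp
  qed
qed

lemma avoids_121_231_imp_bw_inc:
  assumes "avoids_121_231 w" "set w = {1..n}"
  obtains T where "wf_pt T" "bw (inc T) = w"
proof -
  have "\<exists>T. wf_pt T \<and> nvertices T = n \<and> bw (shift 0 (inc T)) = w"
  proof (rule tree_word_if_forest_word)
    fix c m
    assume "set w = {c+1..c+m+1}"
    then show "\<exists>ts. 2 \<le> length ts \<and> (\<forall>t\<in>set ts. wf_pt t) \<and>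
        sum_list (map nvertices ts) = m \<and> bw (LNode (c+m+1) (incs c ts)) = w"
      by (rule forest_word_exists[OF assms(1)])
  qed (simp add: assms(2))
  then show thesis
    using that by auto
qed

section \<open>Increasing trees are determined by their words\<close>

lemma levels_le_root: "incr (LNode l ts) \<Longrightarrow> x \<in> levels (LNode l ts) \<Longrightarrow> x \<le> l"
  by fastforce

lemma takeWhile_append_concat_map_Cons:
  "l \<notin> set x \<Longrightarrow> takeWhile (\<lambda>z. z \<noteq> l) (x @ concat (map ((#) l) ys)) = x"
proof (induction x)
  case Nil
  then show ?case
    by (cases ys) auto
qed auto

lemma append_concat_map_Cons_inject:
  assumes "l \<notin> set x" "l \<notin> set x'" "\<forall>y\<in>set ys. l \<notin> set y" "\<forall>y\<in>set ys'. l \<notin> set y"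
    and "x @ concat (map ((#) l) ys) = x' @ concat (map ((#) l) ys')"
  shows "x = x' \<and> ys = ys'"
  using assms
proof (induction ys arbitrary: x x' ys')
  case Nil
  then have "x = x'"
    using takeWhile_append_concat_map_Cons by metis
  then show ?case
    using Nil.prems(5) by (cases ys') auto
next
  case (Cons y ys)
  then have "x = x'"
    using takeWhile_append_concat_map_Cons by metis
  moreover obtain y' ys'' where "ys' = y' # ys''"
    using Cons.prems(5) \<open>x = x'\<close> by (cases ys') auto
  ultimately show ?case
    using Cons.IH[of y y' ys''] Cons.prems by auto
qed

lemma inj_on_bw: "inj_on bw {t. wf_pt (shape t) \<and> incr t}"
proof -
  have "s = t" if "wf_pt (shape s)" "incr s" "wf_pt (shape t)" "incr t" "bw s = bw t" for s t
    using that
  proof (induction s arbitrary: t)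
    case LLeaf
    then show ?case
      using set_bw_eq_levels[OF LLeaf.prems(3)] by (cases t) auto
  next
    case (LNode l ss)
    from LNode.prems obtain l' ts where t: "t = LNode l' ts"
      using set_bw_eq_levels[of "LNode l ss"] by (cases t) auto
    have "l \<in> levels t" "l' \<in> levels (LNode l ss)"
      using set_bw_eq_levels LNode.prems t by (metis insertI1 levels.simps(2))+
    then have "l' = l"
      using levels_le_root LNode.prems t by (metis le_antisym)
    obtain s ss' r rs where ss: "ss = s # ss'" and ts: "ts = r # rs"
      using LNode.prems t by (cases ss; cases ts) auto
    have "l \<notin> set (bw c)" if "c \<in> set ss \<union> set ts" for c
      using that set_bw_subset_levels[of c] LNode.prems t \<open>l' = l\<close> by fastforce
    moreover have
      "bw s @ concat (map ((#) l) (map bw ss')) = bw r @ concat (map ((#) l) (map bw rs))"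
      using LNode.prems(5) t ss ts \<open>l' = l\<close> by (simp add: o_def)
    ultimately have "map bw ss = map bw ts"
      using append_concat_map_Cons_inject[of l "bw s" "bw r" "map bw ss'" "map bw rs"] ss ts by auto
    then have "ss = ts"
    proof (rule list.inj_map_strong[rotated])
      fix s' t'
      assume "s' \<in> set ss" "t' \<in> set ts" "bw s' = bw t'"
      then show "s' = t'"
        using LNode.IH LNode.prems t by auto
    qed
    then show ?case
      using t \<open>l' = l\<close> by simp
  qed
  then show ?thesis
    by (auto intro: inj_onI)
qed

definition fibre :: "'a list \<Rightarrow> 'a \<Rightarrow> nat set" where
  "fibre w i = {j \<in> {1..length w}. w ! (j - 1) = i}"

lemma sigma_eq_map_fibre: "sigma t = map (fibre (bw t)) [1..<nlevels t + 1]"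
  by (simp add: sigma_def fibre_def[abs_def] nbranch_def)

lemma set_bw_increasing: "is_increasing t \<Longrightarrow> set (bw t) = {1..nlevels t}"
  unfolding is_increasing_def nlevels_def using set_bw_eq_levels by auto

lemma UN_fibre:
  fixes w :: "nat list"
  shows "set w \<subseteq> {1..k} \<Longrightarrow> (\<Union>i\<in>{1..k}. fibre w i) = {1..length w}"
  by (force simp: fibre_def)

lemma map_fibre_inject:
  fixes w w' :: "nat list"
  assumes "set w \<subseteq> {1..k}" "set w' \<subseteq> {1..k}"
    and "map (fibre w) [1..<k+1] = map (fibre w') [1..<k+1]"
  shows "w = w'"
proof -
  have "\<forall>i\<in>set [1..<k+1]. fibre w i = fibre w' i"
    using assms(3) by (simp only: map_eq_conv)
  then have fibre_eq: "fibre w i = fibre w' i" if "i \<in> {1..k}" for i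
    using that by (simp del: upt_Suc)
  then have "{1..length w} = {1..length w'}"
    using UN_fibre[OF assms(1)] UN_fibre[OF assms(2)] by simp
  then have "length w = length w'"
    by (metis card_atLeastAtMost diff_Suc_1)
  then show ?thesis
  proof (rule nth_equalityI)
    fix j
    assume j: "j < length w"
    then have "w ! j \<in> {1..k}" "Suc j \<in> fibre w (w ! j)"
      using assms(1) nth_mem by (fastforce simp: fibre_def)+
    then have "Suc j \<in> fibre w' (w ! j)"
      using fibre_eq by simp
    then show "w ! j = w' ! j"
      by (simp add: fibre_def)
  qed
qed

lemma sigma_inject:
  assumes "is_increasing s" "is_increasing t" "sigma s = sigma t"
  shows "s = t"
proof -
  have "nlevels s = nlevels t"
    using arg_cong[OF assms(3), of length] by (simp add: sigma_def del: upt_Suc)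
  then have "bw s = bw t"
    using map_fibre_inject[of "bw s" "nlevels s" "bw t"] assms
    by (simp add: sigma_eq_map_fibre set_bw_increasing)
  then show ?thesis
    using inj_on_bw assms(1,2) unfolding is_increasing_def inj_on_def by blast
qed

lemma tau_sigma: "is_increasing t \<Longrightarrow> tau (sigma t) = t"
  unfolding tau_def by (rule the_equality) (auto intro: sigma_inject)

section \<open>Restricting set compositions\<close>

definition rank :: "'a::linorder set \<Rightarrow> 'a \<Rightarrow> nat" where
  "rank A x = card {a \<in> A. a \<le> x}"

definition pack :: "'a::linorder list \<Rightarrow> nat list" where
  "pack w = map (rank (set w)) w"

definition subword :: "'a list \<Rightarrow> nat set \<Rightarrow> 'a list" where
  "subword w A = map (\<lambda>j. w ! (j - 1)) (sorted_list_of_set A)"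

lemma rank_nth_sorted_list_of_set:
  assumes "finite A" "i < card A"
  shows "rank A (sorted_list_of_set A ! i) = Suc i"
proof -
  let ?s = "sorted_list_of_set A"
  have sorted: "sorted_wrt (<) ?s" and len: "length ?s = card A" and set: "set ?s = A"
    using assms(1) by simp_all
  have "{a \<in> A. a \<le> ?s ! i} = (!) ?s ` {0..i}"
  proof (intro equalityI subsetI)
    fix a
    assume a: "a \<in> {a \<in> A. a \<le> ?s ! i}"
    then obtain j where j: "j < length ?s" "a = ?s ! j"
      using set by (metis (no_types, lifting) in_set_conv_nth mem_Collect_eq)
    then have "j \<le> i"
      using a sorted_wrt_nth_less[OF sorted, of i j] by (cases "j \<le> i") auto
    then show "a \<in> (!) ?s ` {0..i}"
      using j by auto
  next
    fix a
    assume "a \<in> (!) ?s ` {0..i}"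
    then obtain j where j: "j \<le> i" "a = ?s ! j"
      by auto
    then have "a \<le> ?s ! i"
      using sorted_wrt_nth_less[OF sorted, of j i] assms(2) len by (cases "j = i") auto
    moreover have "a \<in> A"
      using j assms(2) len set by (metis le_less_trans nth_mem)
    ultimately show "a \<in> {a \<in> A. a \<le> ?s ! i}"
      by simp
  qed
  moreover have "inj_on ((!) ?s) {0..i}"
    using assms(2) len by (intro inj_on_nth) auto
  ultimately show ?thesis
    unfolding rank_def by (simp add: card_image)
qed

lemma rank_strict_mono:
  assumes "finite A" "y \<in> A" "x < y"
  shows "rank A x < rank A y"
  unfolding rank_def
proof (rule psubset_card_mono)
  have "{a \<in> A. a \<le> x} \<subseteq> {a \<in> A. a \<le> y}"
    using assms(3) by (auto intro: order.trans[OF _ less_imp_le])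
  moreover have "y \<in> {a \<in> A. a \<le> y}" "y \<notin> {a \<in> A. a \<le> x}"
    using assms(2,3) by (auto simp: not_le)
  ultimately show "{a \<in> A. a \<le> x} \<subset> {a \<in> A. a \<le> y}"
    by blast
qed (use assms(1) in simp)

lemma inj_on_rank:
  assumes "finite A"
  shows "inj_on (rank A) A"
proof (rule inj_onI)
  fix x y
  assume "x \<in> A" "y \<in> A" "rank A x = rank A y"
  then show "x = y"
    using rank_strict_mono[OF assms, of y x] rank_strict_mono[OF assms, of x y]
    by (cases x y rule: linorder_cases) auto
qed

lemma rank_image:
  assumes "finite A"
  shows "rank A ` A = {1..card A}"
proof -
  let ?s = "sorted_list_of_set A"
  have "A = (!) ?s ` {0..<card A}"
    using assms by (simp add: nth_image)
  then have "rank A ` A = rank A ` ((!) ?s ` {0..<card A})"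
    by (rule arg_cong)
  also have "\<dots> = (\<lambda>i. rank A (?s ! i)) ` {0..<card A}"
    by (rule image_image)
  also have "\<dots> = Suc ` {0..<card A}"
    using rank_nth_sorted_list_of_set[OF assms] by (intro image_cong) auto
  finally show ?thesis
    by (simp add: image_Suc_atLeastLessThan atLeastLessThanSuc_atLeastAtMost)
qed

lemma map_rank_sorted_list_of_set:
  "finite A \<Longrightarrow> map (rank A) (sorted_list_of_set A) = [1..<card A + 1]"
  by (rule nth_equalityI) (simp_all add: rank_nth_sorted_list_of_set del: upt_Suc)

lemma set_pack: "set (pack w) = {1..card (set w)}"
  by (simp add: pack_def rank_image)

lemma avoids_121_231_pack: "avoids_121_231 w \<Longrightarrow> avoids_121_231 (pack w)"
  unfolding pack_def by (rule avoids_121_231_map) (simp_all add: rank_strict_mono)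

lemma fibre_pack:
  assumes "i \<in> set w"
  shows "fibre (pack w) (rank (set w) i) = fibre w i"
proof -
  have "rank (set w) (w ! (j - 1)) = rank (set w) i \<longleftrightarrow> w ! (j - 1) = i"
    if "j \<in> {1..length w}" for j
  proof -
    have "w ! (j - 1) \<in> set w"
      using that by (intro nth_mem) auto
    then show ?thesis
      using inj_on_eq_iff[OF inj_on_rank[of "set w"] _ assms] by simp
  qed
  then show ?thesis
    by (auto simp: fibre_def pack_def)
qed

lemma subseq_subword:
  assumes "A \<subseteq> {1..length w}"
  shows "subseq (subword w A) w"
proof -
  have "subseq (sorted_list_of_set A) [1..<length w + 1]"
    using assms finite_subset[OF assms] by (intro sorted_subset_imp_subseq) (auto simp del: upt_Suc)
  then have "subseq (subword w A) (map (\<lambda>j. w ! (j - 1)) [1..<length w + 1])"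
    unfolding subword_def by (rule subseq_map)
  also have "map (\<lambda>j. w ! (j - 1)) [1..<length w + 1] = w"
    by (rule nth_equalityI) (simp_all del: upt_Suc)
  finally show ?thesis .
qed

lemma set_subword: "A \<subseteq> {1..length w} \<Longrightarrow> set (subword w A) = (\<lambda>j. w ! (j - 1)) ` A"
  by (simp add: subword_def finite_subset)

lemma rank_image_fibre_subword:
  assumes "A \<subseteq> {1..length w}"
  shows "rank A ` {j \<in> A. w ! (j - 1) = i} = fibre (subword w A) i"
proof -
  let ?s = "sorted_list_of_set A"
  have fin: "finite A"
    using assms finite_subset by blast
  have nth_rank: "?s ! (rank A j - 1) = j" if "j \<in> A" for j
  proof -
    have "j \<in> set ?s"
      using that fin by simp
    then obtain r where "r < length ?s" "?s ! r = j"
      by (auto simp: in_set_conv_nth)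
    then show ?thesis
      using rank_nth_sorted_list_of_set[OF fin, of r] by simp
  qed
  show ?thesis
  proof (intro equalityI subsetI)
    fix r
    assume "r \<in> rank A ` {j \<in> A. w ! (j - 1) = i}"
    then obtain j where j: "j \<in> A" "w ! (j - 1) = i" "r = rank A j"
      by blast
    then have "r \<in> {1..card A}"
      using rank_image[OF fin] by blast
    then show "r \<in> fibre (subword w A) i"
      using j nth_rank[OF j(1)] by (auto simp: fibre_def subword_def)
  next
    fix r
    assume "r \<in> fibre (subword w A) i"
    then have r: "r \<in> {1..card A}" "w ! (?s ! (r - 1) - 1) = i"
      by (auto simp: fibre_def subword_def)
    then have "r - 1 < length ?s"
      by auto
    then have "?s ! (r - 1) \<in> set ?s"
      by (rule nth_mem)
    then have "?s ! (r - 1) \<in> A" "rank A (?s ! (r - 1)) = r"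
      using fin r(1) rank_nth_sorted_list_of_set[OF fin, of "r - 1"] by auto
    then show "r \<in> rank A ` {j \<in> A. w ! (j - 1) = i}"
      using r(2) by (intro image_eqI[where x="?s ! (r - 1)"]) simp_all
  qed
qed

lemma filter_mem_upt:
  assumes "V \<subseteq> {1..k}"
  shows "filter (\<lambda>i. i \<in> V) [1..<k+1] = sorted_list_of_set V"
proof (rule strict_sorted_equal)
  show "sorted_wrt (<) (filter (\<lambda>i. i \<in> V) [1..<k+1])"
    by (rule sorted_wrt_filter) (rule sorted_wrt_upt)
  show "sorted_wrt (<) (sorted_list_of_set V)"
    by (rule strict_sorted_list_of_set)
  have "finite V"
    using assms finite_subset by blast
  then show "set (filter (\<lambda>i. i \<in> V) [1..<k+1]) = set (sorted_list_of_set V)"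
    using assms by (auto simp del: upt_Suc)
qed

lemma restr_map_fibre:
  fixes w :: "nat list"
  assumes "set w \<subseteq> {1..k}" "A \<subseteq> {1..length w}"
  defines "v \<equiv> subword w A"
  shows "restr (map (fibre w) [1..<k+1]) A = map (fibre (pack v)) [1..<card (set v) + 1]"
proof -
  let ?V = "set v"
  define G where "G i = {j \<in> A. w ! (j - 1) = i}" for i
  have V: "?V = (\<lambda>j. w ! (j - 1)) ` A"
    unfolding v_def using assms(2) by (rule set_subword)
  have "?V \<subseteq> {1..k}"
    using V assms by force
  have fibre_Int: "map (\<lambda>S. S \<inter> A) (map (fibre w) [1..<k+1]) = map G [1..<k+1]"
    using assms(2) by (auto simp: fibre_def G_def simp del: upt_Suc)
  have "G i \<noteq> {} \<longleftrightarrow> i \<in> ?V" for i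
    unfolding V G_def by auto
  then have "filter (\<lambda>S. S \<noteq> {}) (map (\<lambda>S. S \<inter> A) (map (fibre w) [1..<k+1]))
      = map G (filter (\<lambda>i. i \<in> ?V) [1..<k+1])"
    unfolding fibre_Int filter_map o_def by simp
  also have "\<dots> = map G (sorted_list_of_set ?V)"
    unfolding filter_mem_upt[OF \<open>?V \<subseteq> {1..k}\<close>] ..
  finally have
    "restr (map (fibre w) [1..<k+1]) A = map (\<lambda>i. rank A ` G i) (sorted_list_of_set ?V)"
    by (simp add: restr_def rank_def[abs_def])
  also have "\<dots> = map (fibre v) (sorted_list_of_set ?V)"
    unfolding G_def v_def by (rule map_cong[OF refl rank_image_fibre_subword[OF assms(2)]])
  also have "\<dots> = map (fibre (pack v)) (map (rank ?V) (sorted_list_of_set ?V))"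
    by (simp add: fibre_pack)
  also have "\<dots> = map (fibre (pack v)) [1..<card ?V + 1]"
    by (simp add: map_rank_sorted_list_of_set)
  finally show ?thesis .
qed

lemma sigma_eq_restr_sigma:
  assumes "is_increasing s" "is_increasing t" "A \<subseteq> {1..nbranch t}"
    and bw_s: "bw s = pack (subword (bw t) A)"
  shows "sigma s = restr (sigma t) A"
proof -
  let ?v = "subword (bw t) A"
  have "nlevels s = card (set ?v)"
    using set_bw_increasing[OF assms(1)] bw_s set_pack[of ?v]
    by (metis card_atLeastAtMost diff_Suc_1)
  then have "sigma s = map (fibre (pack ?v)) [1..<card (set ?v) + 1]"
    unfolding sigma_eq_map_fibre bw_s by simp
  also have "\<dots> = restr (map (fibre (bw t)) [1..<nlevels t + 1]) A"
  proof (rule restr_map_fibre[symmetric])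
    show "set (bw t) \<subseteq> {1..nlevels t}"
      using set_bw_increasing[OF assms(2)] by simp
    show "A \<subseteq> {1..length (bw t)}"
      using assms(3) by (simp add: nbranch_def)
  qed
  finally show ?thesis
    by (simp only: sigma_eq_map_fibre)
qed

theorem corollary4p7:
  fixes t :: ltree and A :: "nat set"
  assumes "left_increasing t"
    and "A \<subseteq> {1..nbranch t}"
  shows "left_increasing (tau (restr (sigma t) A))"
proof -
  obtain T0 where "inc T0 = t" and t: "is_increasing t"
    using assms(1) unfolding left_increasing_def by blast
  let ?v = "subword (bw t) A"
  have "avoids_121_231 (bw t)"
    using avoids_121_231_bw_inc[of T0] \<open>inc T0 = t\<close> by simp
  moreover have "subseq ?v (bw t)"
    using assms(2) by (intro subseq_subword) (simp add: nbranch_def)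
  ultimately have "avoids_121_231 (pack ?v)"
    by (rule avoids_121_231_pack[OF avoids_121_231_subseq])
  then obtain T where T: "wf_pt T" "bw (inc T) = pack ?v"
    using set_pack by (rule avoids_121_231_imp_bw_inc)
  have inc_T: "is_increasing (inc T)"
    using T(1) by (rule is_increasing_inc)
  have "sigma (inc T) = restr (sigma t) A"
    using inc_T t assms(2) T(2) by (rule sigma_eq_restr_sigma)
  then have "tau (restr (sigma t) A) = inc T"
    using tau_sigma[OF inc_T] by simp
  then show ?thesis
    using T(1) inc_T by (auto simp: left_increasing_def)
qed

end
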